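(* Let $\Delta\ge2$ and let $G$ be a graph of maximum degree $\Delta$ with a perfect matching $M$. Then for all $z\in\mathbb C$ with \[|z|\le\sqrt{\frac{3-\sqrt5}{2(\Delta-1)\,e^{(\sqrt5-1)/2}}}\ \ \big(\approx(4.85718(\Delta-1))^{-1/2}\big),\] we have $Z_{\mathrm{pm}}(G,M,z)\neq0$, and the Taylor series of $\log Z_{\mathrm{pm}}(G,M,z)$ in $z$ about $0$ converges absolutely at $z$.
   Context: $Z_{\mathrm{pm}}(G,M,z)=\sum_{M'}z^{|M\triangle M'|}$, the sum over all perfect matchings $M'$ of $G$; it is a polynomial in $z$ with constant term $1$. *)

theory Defs
  imports "HOL-Analysis.Analysis"
begin

definition simple_graph :: "'a set \<Rightarrow> 'a set set \<Rightarrow> bool" where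
  "simple_graph V E \<longleftrightarrow> finite V \<and> (\<forall>e\<in>E. e \<subseteq> V \<and> card e = 2)"

definition degree :: "'a set set \<Rightarrow> 'a \<Rightarrow> nat" where
  "degree E v = card {e\<in>E. v \<in> e}"

definition max_degree_eq :: "'a set \<Rightarrow> 'a set set \<Rightarrow> nat \<Rightarrow> bool" where
  "max_degree_eq V E D \<longleftrightarrow> (\<forall>v\<in>V. degree E v \<le> D) \<and> (\<exists>v\<in>V. degree E v = D)"

definition perfect_matching :: "'a set \<Rightarrow> 'a set set \<Rightarrow> 'a set set \<Rightarrow> bool" where
  "perfect_matching V E M \<longleftrightarrow> M \<subseteq> E \<and>
     (\<forall>e1\<in>M. \<forall>e2\<in>M. e1 \<noteq> e2 \<longrightarrow> e1 \<inter> e2 = {}) \<and> \<Union>M = V"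

definition Zpm :: "'a set \<Rightarrow> 'a set set \<Rightarrow> 'a set set \<Rightarrow> complex \<Rightarrow> complex" where
  "Zpm V E M z = (\<Sum>M'\<in>{M'. perfect_matching V E M'}. z ^ card (M - M' \<union> (M' - M)))"

text \<open>n-th Taylor coefficient at 0 of log Z_pm (principal logarithm; Z_pm(0) = 1,
  so this is the branch of log Z_pm with value 0 at 0).\<close>
definition log_Zpm_coeff :: "'a set \<Rightarrow> 'a set set \<Rightarrow> 'a set set \<Rightarrow> nat \<Rightarrow> complex" where
  "log_Zpm_coeff V E M n = (deriv ^^ n) (\<lambda>w. Ln (Zpm V E M w)) 0 / fact n"

end

theory Submission
  imports Defs "HOL-Complex_Analysis.Complex_Analysis"
begin

text \<open>Write \<open>Z(W)\<close> for the sum, over the perfect matchings \<open>F\<close> of the subgraph induced on \<open>W\<close>,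
  of \<open>x\<^bsup>|F - M|\<^esup>\<close>; then \<open>Z\<^sub>p\<^sub>m(G, M, z) = Z(V)\<close> at \<open>x = z\<^sup>2\<close>. For \<open>S \<subseteq> M\<close> and
  \<open>s = (\<Delta> - 1)|x| \<le> 1/2\<close>, induction on \<open>|S|\<close> proves two ratio bounds simultaneously:
  removing a matching edge \<open>e \<in> S\<close> at most doubles \<open>|Z(\<Union>S)|\<close>, and removing one endpoint
  of each of two edges \<open>e \<noteq> f\<close> of \<open>S\<close> gives at most \<open>s |Z(\<Union>(S - {e, f}))|\<close>. Both follow
  by expanding \<open>Z\<close> along the matching partner of a removed vertex, which has at most
  \<open>\<Delta> - 1\<close> relevant neighbours, each reached by an edge of weight \<open>x\<close>. The first bound
  makes \<open>Z(\<Union>S)\<close> nonzero for all \<open>S \<subseteq> M\<close>, so \<open>Z\<^sub>p\<^sub>m\<close> has no zeros in the disc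
  \<open>(\<Delta> - 1)|z|\<^sup>2 < 1/2\<close>, which contains the stated one. There \<open>Z\<^sub>p\<^sub>m\<close> has a holomorphic
  logarithm vanishing at 0; it agrees with \<open>Ln \<circ> Z\<^sub>p\<^sub>m\<close> near 0, so the Taylor series of the
  latter converges absolutely throughout the disc.\<close>

definition perfect_matchings :: "'a set set \<Rightarrow> 'a set \<Rightarrow> 'a set set set" where
  "perfect_matchings E W =
     {F. F \<subseteq> E \<and> (\<forall>e1\<in>F. \<forall>e2\<in>F. e1 \<noteq> e2 \<longrightarrow> e1 \<inter> e2 = {}) \<and> \<Union>F = W}"

definition matching_sum :: "'a set set \<Rightarrow> 'a set set \<Rightarrow> complex \<Rightarrow> 'a set \<Rightarrow> complex" where
  "matching_sum E M x W = (\<Sum>F\<in>perfect_matchings E W. x ^ card (F - M))"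

lemma perfect_matchings_empty:
  assumes "\<forall>e\<in>E. card e = 2"
  shows "perfect_matchings E {} = {{}}"
proof -
  have "{} \<notin> E" using assms by force
  then show ?thesis unfolding perfect_matchings_def by auto
qed

lemma matching_sum_empty:
  assumes "\<forall>e\<in>E. card e = 2"
  shows "matching_sum E M x {} = 1"
  unfolding matching_sum_def perfect_matchings_empty[OF assms] by simp

lemma finite_perfect_matchings: "finite E \<Longrightarrow> finite (perfect_matchings E W)"
  unfolding perfect_matchings_def
  by (rule rev_finite_subset[OF finite_Pow_iff[THEN iffD2]]) auto

lemma card_perfect_matching:
  assumes "\<forall>e\<in>E. card e = 2" and "F \<in> perfect_matchings E W"
  shows "card W = 2 * card F"
proof -
  have F: "F \<subseteq> E" "pairwise disjnt F" "\<Union>F = W"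
    using assms(2) unfolding perfect_matchings_def pairwise_def disjnt_def by auto
  have "\<And>A. A \<in> F \<Longrightarrow> finite A"
    using F(1) assms(1) by (intro card_ge_0_finite) auto
  with F(2) have "card (\<Union>F) = sum card F" by (rule card_Union_disjoint)
  also have "\<dots> = (\<Sum>e\<in>F. 2)" using F(1) assms(1) by (intro sum.cong) auto
  finally show ?thesis using F(3) by simp
qed

lemma perfect_matchings_with_edge:
  assumes "e \<in> E" and "e \<subseteq> W" and "e \<noteq> {}"
  shows "bij_betw (insert e) (perfect_matchings E (W - e)) {F \<in> perfect_matchings E W. e \<in> F}"
proof (rule bij_betwI[where g = "\<lambda>F. F - {e}"])
  show "insert e \<in> perfect_matchings E (W - e) \<rightarrow> {F \<in> perfect_matchings E W. e \<in> F}"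
    using assms unfolding perfect_matchings_def by (auto; blast)
  show "(\<lambda>F. F - {e}) \<in> {F \<in> perfect_matchings E W. e \<in> F} \<rightarrow> perfect_matchings E (W - e)"
    unfolding perfect_matchings_def by (auto; blast)
  show "insert e F - {e} = F" if "F \<in> perfect_matchings E (W - e)" for F
    using that assms(3) unfolding perfect_matchings_def by auto
  show "insert e (F - {e}) = F" if "F \<in> {F \<in> perfect_matchings E W. e \<in> F}" for F
    using that by auto
qed

lemma sum_perfect_matchings_with_edge:
  assumes "finite E" and "e \<in> E" and "e \<subseteq> W" and "e \<noteq> {}"
  shows "(\<Sum>F\<in>{F \<in> perfect_matchings E W. e \<in> F}. x ^ card (F - M)) =
    (if e \<in> M then 1 else x) * matching_sum E M x (W - e)"
proof -
  have "(\<Sum>F\<in>{F \<in> perfect_matchings E W. e \<in> F}. x ^ card (F - M)) =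
      (\<Sum>F\<in>perfect_matchings E (W - e). x ^ card (insert e F - M))"
    by (rule sum.reindex_bij_betw[OF perfect_matchings_with_edge[OF assms(2-4)], symmetric])
  also have "\<dots> = (\<Sum>F\<in>perfect_matchings E (W - e). (if e \<in> M then 1 else x) * x ^ card (F - M))"
  proof (rule sum.cong[OF refl])
    fix F assume F: "F \<in> perfect_matchings E (W - e)"
    then have "e \<notin> F" and "finite F"
      using assms(1,4) unfolding perfect_matchings_def by (auto intro: finite_subset)
    then show "x ^ card (insert e F - M) = (if e \<in> M then 1 else x) * x ^ card (F - M)"
      by (cases "e \<in> M") (auto simp: insert_Diff_if)
  qed
  finally show ?thesis by (simp add: matching_sum_def sum_distrib_left)
qed

lemma matching_sum_expand:
  assumes finE: "finite E" and E2: "\<forall>e\<in>E. card e = 2" and u: "u \<in> W"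
  shows "matching_sum E M x W =
    (\<Sum>y\<in>{y \<in> W. {u, y} \<in> E}. (if {u, y} \<in> M then 1 else x) * matching_sum E M x (W - {u, y}))"
proof -
  define N where "N = {y \<in> W. {u, y} \<in> E}"
  have "N \<subseteq> \<Union>E" unfolding N_def by auto
  moreover have "finite (\<Union>E)" using finE E2 by (metis finite_Union card.infinite zero_neq_numeral)
  ultimately have finN: "finite N" by (rule finite_subset)
  define C where "C y = {F \<in> perfect_matchings E W. {u, y} \<in> F}" for y
  have cover: "perfect_matchings E W = (\<Union>y\<in>N. C y)"
  proof safe
    fix F assume F: "F \<in> perfect_matchings E W"
    with u obtain e where e: "e \<in> F" "u \<in> e" "e \<in> E"
      unfolding perfect_matchings_def by auto
    with E2 obtain y where "e = {u, y}"
      by (metis card_2_iff insert_commute insertE singletonD)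
    with F e show "F \<in> (\<Union>y\<in>N. C y)"
      unfolding C_def N_def perfect_matchings_def by auto
  qed (auto simp: C_def)
  have disjoint: "C y \<inter> C y' = {}" if "y \<noteq> y'" for y y'
  proof (rule ccontr)
    assume "\<not> ?thesis"
    then obtain F where F: "F \<in> perfect_matchings E W" "{u, y} \<in> F" "{u, y'} \<in> F"
      unfolding C_def by blast
    then have pairwise: "\<forall>e1\<in>F. \<forall>e2\<in>F. e1 \<noteq> e2 \<longrightarrow> e1 \<inter> e2 = {}"
      unfolding perfect_matchings_def by simp
    have "{u, y} \<noteq> {u, y'}" using that by (auto simp: doubleton_eq_iff)
    then have "{u, y} \<inter> {u, y'} = {}" using bspec[OF bspec[OF pairwise F(2)] F(3)] by blast
    then show False by simp
  qed
  have "matching_sum E M x W = (\<Sum>y\<in>N. \<Sum>F\<in>C y. x ^ card (F - M))"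
    unfolding matching_sum_def cover
    by (rule sum.UNION_disjoint) (use finN finite_perfect_matchings[OF finE] disjoint in \<open>auto simp: C_def\<close>)
  also have "\<dots> = (\<Sum>y\<in>N. (if {u, y} \<in> M then 1 else x) * matching_sum E M x (W - {u, y}))"
    unfolding C_def using u
    by (intro sum.cong refl sum_perfect_matchings_with_edge[OF finE]) (auto simp: N_def)
  finally show ?thesis unfolding N_def .
qed

lemma norm_sum_le_card_mult:
  fixes f :: "'b \<Rightarrow> 'c::real_normed_vector"
  assumes "\<And>y. y \<in> N \<Longrightarrow> norm (f y) \<le> c" and "card N \<le> k" and "c \<ge> 0"
  shows "norm (sum f N) \<le> real k * c"
proof -
  have "norm (sum f N) \<le> real (card N) * c"
    using sum_norm_le[of N f "\<lambda>_. c"] assms(1) by simp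
  also have "\<dots> \<le> real k * c" using assms(2,3) by (intro mult_right_mono) auto
  finally show ?thesis .
qed

locale matched_graph =
  fixes V :: "'a set" and E M :: "'a set set" and D :: nat
  assumes finite_V: "finite V" and edges: "\<forall>e\<in>E. e \<subseteq> V \<and> card e = 2"
    and degree_le: "\<forall>v\<in>V. degree E v \<le> D" and perfect_M: "perfect_matching V E M"
begin

abbreviation Z :: "complex \<Rightarrow> 'a set \<Rightarrow> complex" where
  "Z x W \<equiv> matching_sum E M x W"

lemma card_edge: "\<forall>e\<in>E. card e = 2"
  using edges by auto

lemma finite_E: "finite E"
proof -
  have "E \<subseteq> Pow V" using edges by auto
  then show ?thesis using finite_V by (meson finite_Pow_iff finite_subset)
qed

lemma M_subset_E: "M \<subseteq> E"
  using perfect_M unfolding perfect_matching_def by simp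

lemma Union_M: "\<Union>M = V"
  using perfect_M unfolding perfect_matching_def by simp

lemma finite_M: "finite M"
  using M_subset_E finite_E by (rule finite_subset)

lemma M_in_perfect_matchings: "M \<in> perfect_matchings E V"
  using perfect_M unfolding perfect_matching_def perfect_matchings_def by simp

lemma matching_edge_unique: "e1 \<in> M \<Longrightarrow> e2 \<in> M \<Longrightarrow> a \<in> e1 \<Longrightarrow> a \<in> e2 \<Longrightarrow> e1 = e2"
  using perfect_M unfolding perfect_matching_def by blast

lemma obtain_edge_partner:
  assumes "e \<in> E" and "a \<in> e"
  obtains a' where "e = {a, a'}" and "a \<noteq> a'"
proof -
  obtain p q where pq: "e = {p, q}" "p \<noteq> q"
    using assms(1) card_edge by (meson card_2_iff)
  with assms(2) that show ?thesis by (auto simp: insert_commute)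
qed

lemma edge_endpoints_neq: "{a, y} \<in> E \<Longrightarrow> a \<noteq> y"
  using card_edge by fastforce

lemma Union_Diff_matched:
  assumes "S \<subseteq> M" and "T \<subseteq> S"
  shows "\<Union>(S - T) = \<Union>S - \<Union>T"
  using assms matching_edge_unique by blast

lemma card_neighbours_le:
  assumes "a' \<in> V" and "{a, a'} \<in> E" and "a \<notin> W"
  shows "card {y \<in> W. {a', y} \<in> E} \<le> D - 1"
proof -
  let ?N = "{y \<in> W. {a', y} \<in> E}"
  have "inj_on (\<lambda>y. {a', y}) ?N" by (auto simp: inj_on_def doubleton_eq_iff)
  moreover have "(\<lambda>y. {a', y}) ` ?N \<subseteq> {e \<in> E. a' \<in> e} - {{a, a'}}"
    using assms(3) by (auto simp: doubleton_eq_iff)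
  ultimately have "card ?N \<le> card ({e \<in> E. a' \<in> e} - {{a, a'}})"
    using finite_E by (intro card_inj_on_le) auto
  also have "\<dots> = card {e \<in> E. a' \<in> e} - 1"
    using assms(2) finite_E by (subst card_Diff_singleton) auto
  also have "\<dots> \<le> D - 1"
    using degree_le assms(1) unfolding degree_def by (simp add: diff_le_mono)
  finally show ?thesis .
qed

lemma finite_neighbours: "finite {y \<in> W. {u, y} \<in> E}"
  by (rule finite_subset[OF _ finite_V]) (use edges in auto)

definition removal_bounded :: "complex \<Rightarrow> 'a set set \<Rightarrow> bool" where
  "removal_bounded x S \<longleftrightarrow> (\<forall>e\<in>S. norm (Z x (\<Union>(S - {e}))) \<le> 2 * norm (Z x (\<Union>S)))"

definition pair_removal_bounded :: "complex \<Rightarrow> 'a set set \<Rightarrow> bool" where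
  "pair_removal_bounded x S \<longleftrightarrow> (\<forall>e f a b. e \<in> S \<longrightarrow> f \<in> S \<longrightarrow> e \<noteq> f \<longrightarrow> a \<in> e \<longrightarrow> b \<in> f \<longrightarrow>
     norm (Z x (\<Union>S - {a, b})) \<le> real (D - 1) * norm x * norm (Z x (\<Union>(S - {e, f}))))"

lemma removal_boundedD:
  "removal_bounded x S \<Longrightarrow> e \<in> S \<Longrightarrow> norm (Z x (\<Union>(S - {e}))) \<le> 2 * norm (Z x (\<Union>S))"
  unfolding removal_bounded_def by blast

lemma pair_removal_boundedD:
  "pair_removal_bounded x S \<Longrightarrow> e \<in> S \<Longrightarrow> f \<in> S \<Longrightarrow> e \<noteq> f \<Longrightarrow> a \<in> e \<Longrightarrow> b \<in> f \<Longrightarrow>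
     norm (Z x (\<Union>S - {a, b})) \<le> real (D - 1) * norm x * norm (Z x (\<Union>(S - {e, f})))"
  unfolding pair_removal_bounded_def by blast

lemma removal_bounds_chain:
  assumes pair: "pair_removal_bounded x S" and removal: "removal_bounded x (S - {e})"
    and "e \<in> S" and "g \<in> S" and "e \<noteq> g" and "u \<in> e" and "y \<in> g"
  shows "norm (Z x (\<Union>S - {u, y})) \<le> 2 * (real (D - 1) * norm x) * norm (Z x (\<Union>(S - {e})))"
proof -
  let ?s = "real (D - 1) * norm x"
  have "S - {e, g} = S - {e} - {g}" by auto
  moreover have "norm (Z x (\<Union>S - {u, y})) \<le> ?s * norm (Z x (\<Union>(S - {e, g})))"
    by (rule pair_removal_boundedD[OF pair]) (use assms(3-7) in auto)
  ultimately have "norm (Z x (\<Union>S - {u, y})) \<le> ?s * norm (Z x (\<Union>(S - {e} - {g})))"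
    by (simp only:)
  also have "\<dots> \<le> ?s * (2 * norm (Z x (\<Union>(S - {e}))))"
    by (intro mult_left_mono removal_boundedD[OF removal]) (use assms(4,5) in auto)
  finally show ?thesis by (simp add: mult_ac)
qed

text \<open>Expand \<open>Z(\<Union>S - {a, b})\<close> along the partner \<open>a'\<close> of \<open>a\<close>: the neighbour \<open>b'\<close> of \<open>b\<close>
  gives exactly \<open>Z(\<Union>(S - {e, f}))\<close>; any other neighbour lies on a third edge \<open>g\<close>.\<close>
lemma pair_removal_bounded_step:
  assumes small: "real (D - 1) * norm x \<le> 1/2" and S: "S \<subseteq> M"
    and IH: "\<And>S'. S' \<subset> S \<Longrightarrow> removal_bounded x S' \<and> pair_removal_bounded x S'"
  shows "pair_removal_bounded x S"
  unfolding pair_removal_bounded_def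
proof (intro allI impI)
  fix e f a b assume e: "e \<in> S" and f: "f \<in> S" and ef: "e \<noteq> f" and a: "a \<in> e" and b: "b \<in> f"
  have eM: "e \<in> M" and fM: "f \<in> M" using e f S by auto
  obtain a' where ea: "e = {a, a'}" "a \<noteq> a'"
    using obtain_edge_partner[of e a] eM a M_subset_E by auto
  obtain b' where fb: "f = {b, b'}" "b \<noteq> b'"
    using obtain_edge_partner[of f b] fM b M_subset_E by auto
  have "e \<inter> f = {}" using matching_edge_unique[of e f] eM fM ef by auto
  define W where "W = \<Union>S - {a, b}"
  define Z' where "Z' = norm (Z x (\<Union>(S - {e, f})))"
  have a'W: "a' \<in> W" and aW: "a \<notin> W"
    using ea e \<open>e \<inter> f = {}\<close> fb unfolding W_def by auto
  have a'V: "a' \<in> V" using ea eM Union_M by auto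
  have term_le: "norm ((if {a', y} \<in> M then 1 else x) * Z x (W - {a', y})) \<le> norm x * Z'"
    if y: "y \<in> W" "{a', y} \<in> E" for y
  proof -
    have ya': "y \<noteq> a'" using edge_endpoints_neq[OF y(2)] by simp
    have ya: "y \<noteq> a" using y aW by auto
    have notM: "{a', y} \<notin> M"
      using matching_edge_unique[of "{a', y}" e a'] eM ea ya ya' by auto
    obtain g where g: "g \<in> S" "y \<in> g" using y(1) unfolding W_def by auto
    have ge: "g \<noteq> e" using g ya ya' ea by auto
    have "norm (Z x (W - {a', y})) \<le> Z'"
    proof (cases "g = f")
      case True
      then have "y = b'" using g fb y(1) unfolding W_def by auto
      then have "W - {a', y} = \<Union>(S - {e, f})"
        using Union_Diff_matched[of S "{e, f}"] S e f ea fb unfolding W_def by auto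
      then show ?thesis unfolding Z'_def by simp
    next
      case False
      have "W - {a', y} = \<Union>(S - {e}) - {b, y}"
        using Union_Diff_matched[of S "{e}"] S e ea unfolding W_def by auto
      moreover have "S - {e} - {f} = S - {e, f}" by auto
      moreover have "pair_removal_bounded x (S - {e})" "removal_bounded x (S - {e} - {f})"
        using IH[of "S - {e}"] IH[of "S - {e} - {f}"] e by auto
      ultimately have "norm (Z x (W - {a', y})) \<le> 2 * (real (D - 1) * norm x) * Z'"
        using removal_bounds_chain[of x "S - {e}" f g b y] f g ef ge False b
        unfolding Z'_def by auto
      also have "\<dots> \<le> Z'"
        using small mult_right_mono[of "2 * (real (D - 1) * norm x)" 1 Z'] unfolding Z'_def by simp
      finally show ?thesis .
    qed
    then show ?thesis using notM by (simp add: norm_mult mult_left_mono)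
  qed
  have "norm (Z x W) \<le> real (D - 1) * (norm x * Z')"
    unfolding matching_sum_expand[OF finite_E card_edge a'W]
  proof (rule norm_sum_le_card_mult)
    show "card {y \<in> W. {a', y} \<in> E} \<le> D - 1"
      using card_neighbours_le[OF a'V _ aW] ea eM M_subset_E by auto
  qed (use term_le Z'_def in auto)
  then show "norm (Z x (\<Union>S - {a, b})) \<le> real (D - 1) * norm x * norm (Z x (\<Union>(S - {e, f})))"
    unfolding W_def Z'_def by (simp add: mult.assoc)
qed

text \<open>Expand \<open>Z(\<Union>S)\<close> at an endpoint \<open>u\<close> of \<open>e = {u, v}\<close>: the term of \<open>v\<close> is
  \<open>Z(\<Union>(S - {e}))\<close>, and the remaining terms together are at most \<open>2s\<^sup>2 \<le> 1/2\<close> times its norm.\<close>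
lemma removal_bounded_step:
  assumes small: "real (D - 1) * norm x \<le> 1/2" and S: "S \<subseteq> M"
    and pair: "pair_removal_bounded x S"
    and IH: "\<And>S'. S' \<subset> S \<Longrightarrow> removal_bounded x S' \<and> pair_removal_bounded x S'"
  shows "removal_bounded x S"
  unfolding removal_bounded_def
proof
  fix e assume e: "e \<in> S"
  define s where "s = real (D - 1) * norm x"
  define W where "W = \<Union>S"
  define Z1 where "Z1 = norm (Z x (\<Union>(S - {e})))"
  have eM: "e \<in> M" using e S by auto
  then have eE: "e \<in> E" using M_subset_E by auto
  then obtain u where u: "u \<in> e" using card_edge by (metis all_not_in_conv card.empty zero_neq_numeral)
  then obtain v where uv: "e = {u, v}" "u \<noteq> v" using obtain_edge_partner eE by blast
  define N where "N = {y \<in> W. {u, y} \<in> E}"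
  define T where "T y = (if {u, y} \<in> M then 1 else x) * Z x (W - {u, y})" for y
  have uW: "u \<in> W" and vN: "v \<in> N" using e uv eE unfolding W_def N_def by auto
  have uV: "u \<in> V" using eM uv Union_M by auto
  have "Z x W = T v + sum T (N - {v})"
    unfolding matching_sum_expand[OF finite_E card_edge uW] T_def[symmetric] N_def[symmetric]
    using vN finite_neighbours unfolding N_def by (subst sum.remove) auto
  moreover have "T v = Z x (\<Union>(S - {e}))"
    using Union_Diff_matched[of S "{e}"] S e eM uv unfolding T_def W_def by auto
  ultimately have "Z x (\<Union>(S - {e})) = Z x W - sum T (N - {v})" by simp
  then have Z1_le: "Z1 \<le> norm (Z x W) + norm (sum T (N - {v}))"
    unfolding Z1_def by (simp only: norm_triangle_ineq4)
  have term_le: "norm (T y) \<le> norm x * (2 * s * Z1)" if y: "y \<in> N - {v}" for y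
  proof -
    have yW: "y \<in> W" and yE: "{u, y} \<in> E" and yv: "y \<noteq> v" using y unfolding N_def by auto
    have yu: "y \<noteq> u" using edge_endpoints_neq[OF yE] by simp
    have notM: "{u, y} \<notin> M"
      using matching_edge_unique[of "{u, y}" e u] eM uv yu yv by (auto simp: doubleton_eq_iff)
    obtain g where g: "g \<in> S" "y \<in> g" using yW unfolding W_def by auto
    have "g \<noteq> e" using g yu yv uv by auto
    moreover have "removal_bounded x (S - {e})" using IH[of "S - {e}"] e by auto
    ultimately have "norm (Z x (W - {u, y})) \<le> 2 * s * Z1"
      using removal_bounds_chain[OF pair _ e g(1) _ u g(2)] unfolding s_def Z1_def W_def by auto
    then show ?thesis using notM unfolding T_def by (simp add: norm_mult mult_left_mono)
  qed
  have "norm (sum T (N - {v})) \<le> real (D - 1) * (norm x * (2 * s * Z1))"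
  proof (rule norm_sum_le_card_mult)
    have "N - {v} = {y \<in> W - {v}. {u, y} \<in> E}" unfolding N_def by auto
    then show "card (N - {v}) \<le> D - 1"
      using card_neighbours_le[OF uV, of v "W - {v}"] uv eE by (auto simp: insert_commute)
  qed (use term_le Z1_def s_def in auto)
  also have "\<dots> = 2 * s * s * Z1" unfolding s_def by simp
  also have "\<dots> \<le> Z1 / 2"
  proof -
    have "s * s \<le> 1/2 * (1/2)" using small unfolding s_def by (intro mult_mono) auto
    then show ?thesis using mult_right_mono[of "s * s" "1/4" Z1] unfolding Z1_def by simp
  qed
  finally show "norm (Z x (\<Union>(S - {e}))) \<le> 2 * norm (Z x (\<Union>S))"
    using Z1_le unfolding Z1_def W_def by linarith
qed

lemma matched_ratio_bounds:
  assumes small: "real (D - 1) * norm x \<le> 1/2" and "S \<subseteq> M"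
  shows "removal_bounded x S \<and> pair_removal_bounded x S"
proof -
  have "finite S" using assms(2) finite_M by (rule finite_subset)
  then show ?thesis using assms(2)
  proof (induction S rule: finite_psubset_induct)
    case (psubset S)
    have IH: "removal_bounded x S' \<and> pair_removal_bounded x S'" if "S' \<subset> S" for S'
      using psubset.IH[of S'] psubset.prems that by auto
    have pair: "pair_removal_bounded x S"
      by (rule pair_removal_bounded_step[OF small psubset.prems IH])
    moreover have "removal_bounded x S"
      by (rule removal_bounded_step[OF small psubset.prems pair IH])
    ultimately show ?case by simp
  qed
qed

lemma matching_sum_Union_nonzero:
  assumes small: "real (D - 1) * norm x \<le> 1/2" and "S \<subseteq> M"
  shows "Z x (\<Union>S) \<noteq> 0"
proof -
  have "finite S" using assms(2) finite_M by (rule finite_subset)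
  then show ?thesis using assms(2)
  proof (induction S rule: finite_induct)
    case empty
    then show ?case using matching_sum_empty[OF card_edge] by simp
  next
    case (insert e S)
    have "removal_bounded x (insert e S)"
      using matched_ratio_bounds[OF small insert.prems] by simp
    then have "norm (Z x (\<Union>(insert e S - {e}))) \<le> 2 * norm (Z x (\<Union>(insert e S)))"
      by (rule removal_boundedD) simp
    then have "norm (Z x (\<Union>S)) \<le> 2 * norm (Z x (\<Union>(insert e S)))"
      using insert.hyps(2) by simp
    moreover have "Z x (\<Union>S) \<noteq> 0" using insert by auto
    ultimately show ?case by auto
  qed
qed

lemma Zpm_eq_matching_sum: "Zpm V E M z = Z (z ^ 2) V"
proof -
  have pm_eq: "{M'. perfect_matching V E M'} = perfect_matchings E V"
    unfolding perfect_matching_def perfect_matchings_def by auto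
  have "z ^ card (M - M' \<union> (M' - M)) = (z ^ 2) ^ card (M' - M)"
    if M': "M' \<in> perfect_matchings E V" for M'
  proof -
    have "finite M'" using M' finite_E unfolding perfect_matchings_def by (auto intro: finite_subset)
    moreover have "card M = card M'"
      using card_perfect_matching[OF card_edge M'] card_perfect_matching[OF card_edge M_in_perfect_matchings]
      by simp
    ultimately have "card (M - M') = card (M' - M)"
      using finite_M by (simp add: card_Diff_subset_Int Int_commute)
    moreover have "card (M - M' \<union> (M' - M)) = card (M - M') + card (M' - M)"
      using finite_M \<open>finite M'\<close> by (intro card_Un_disjoint) auto
    ultimately show ?thesis by (simp add: power_mult[symmetric] mult_2)
  qed
  then show ?thesis unfolding Zpm_def matching_sum_def pm_eq by (intro sum.cong) auto
qed

lemma Zpm_at_0: "Zpm V E M 0 = 1"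
proof -
  have fin: "finite {M'. perfect_matching V E M'}"
    by (rule finite_subset[OF _ finite_Pow_iff[THEN iffD2, OF finite_E]])
      (auto simp: perfect_matching_def)
  have "Zpm V E M 0 = (\<Sum>M'\<in>{M'. perfect_matching V E M'}. if M' = M then 1 else 0)"
    unfolding Zpm_def
  proof (rule sum.cong[OF refl])
    fix M' assume "M' \<in> {M'. perfect_matching V E M'}"
    then have "finite M'" using finite_E unfolding perfect_matching_def by (auto intro: finite_subset)
    then show "(0::complex) ^ card (M - M' \<union> (M' - M)) = (if M' = M then 1 else 0)"
      using finite_M by auto
  qed
  also have "\<dots> = 1" using fin perfect_M by (simp add: sum.delta')
  finally show ?thesis .
qed

lemma Zpm_nonzero:
  assumes "real (D - 1) * norm w ^ 2 \<le> 1/2"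
  shows "Zpm V E M w \<noteq> 0"
  using matching_sum_Union_nonzero[of "w ^ 2" M] assms
  by (simp add: Zpm_eq_matching_sum Union_M norm_power)

end

lemma holomorphic_logarithm_vanishing_at_0:
  fixes f :: "complex \<Rightarrow> complex"
  assumes hol: "f holomorphic_on ball 0 R" and nz: "\<And>w. w \<in> ball 0 R \<Longrightarrow> f w \<noteq> 0"
    and f0: "f 0 = 1" and R: "R > 0"
  obtains h where "h holomorphic_on ball 0 R" and "\<And>w. w \<in> ball 0 R \<Longrightarrow> exp (h w) = f w"
    and "h 0 = 0"
proof -
  obtain g where g: "g holomorphic_on ball 0 R" "\<And>w. w \<in> ball 0 R \<Longrightarrow> exp (g w) = f w"
    using holomorphic_logarithm_exists[of "ball 0 R" f 0] hol nz R by auto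
  show ?thesis
  proof
    show "(\<lambda>w. g w - g 0) holomorphic_on ball 0 R" by (intro holomorphic_intros g(1))
    show "exp (g w - g 0) = f w" if "w \<in> ball 0 R" for w
      using g(2)[OF that] g(2)[of 0] R f0 by (simp add: exp_diff)
  qed simp
qed

lemma Ln_eventually_eq_logarithm:
  fixes f h :: "complex \<Rightarrow> complex"
  assumes hol: "h holomorphic_on ball 0 R" and exp_h: "\<And>w. w \<in> ball 0 R \<Longrightarrow> exp (h w) = f w"
    and h0: "h 0 = 0" and R: "R > 0"
  shows "eventually (\<lambda>w. Ln (f w) = h w) (nhds 0)"
proof -
  define U where "U = ball 0 R \<inter> h -` ball 0 pi"
  have "open U"
    unfolding U_def using holomorphic_on_imp_continuous_on[OF hol]
    by (rule continuous_open_preimage) auto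
  moreover have "0 \<in> U" unfolding U_def using R h0 by simp
  moreover have "Ln (f w) = h w" if "w \<in> U" for w
  proof -
    have "\<bar>Im (h w)\<bar> < pi"
      using that abs_Im_le_cmod[of "h w"] unfolding U_def by auto
    then show ?thesis using exp_h that Ln_exp[of "h w"] unfolding U_def by auto
  qed
  ultimately show ?thesis unfolding eventually_nhds by blast
qed

lemma summable_Taylor_Ln:
  fixes f :: "complex \<Rightarrow> complex"
  assumes hol: "f holomorphic_on ball 0 R" and nz: "\<And>w. w \<in> ball 0 R \<Longrightarrow> f w \<noteq> 0"
    and f0: "f 0 = 1" and z: "norm z < R"
  shows "summable (\<lambda>n. norm ((deriv ^^ n) (\<lambda>w. Ln (f w)) 0 / fact n * z ^ n))"
proof -
  have R: "R > 0" using z norm_ge_zero[of z] by linarith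
  obtain h where h: "h holomorphic_on ball 0 R" "\<And>w. w \<in> ball 0 R \<Longrightarrow> exp (h w) = f w" "h 0 = 0"
    using holomorphic_logarithm_vanishing_at_0[OF hol nz f0 R] by blast
  have derivs: "(deriv ^^ n) (\<lambda>w. Ln (f w)) 0 = (deriv ^^ n) h 0" for n
    using higher_deriv_cong_ev[OF Ln_eventually_eq_logarithm[OF h R] refl] .
  define \<rho> where "\<rho> = (norm z + R) / 2"
  have "norm z < \<rho>" "\<rho> < R" unfolding \<rho>_def using z by auto
  then have "\<bar>\<rho>\<bar> < R" using norm_ge_zero[of z] by linarith
  then have "(\<lambda>n. (deriv ^^ n) h 0 / fact n * (complex_of_real \<rho> - 0) ^ n) sums h \<rho>"
    by (intro holomorphic_power_series[OF h(1)]) simp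
  then have "summable (\<lambda>n. (deriv ^^ n) h 0 / fact n * complex_of_real \<rho> ^ n)"
    by (simp add: sums_summable)
  then show ?thesis
    unfolding derivs by (rule powser_insidea) (use \<open>norm z < \<rho>\<close> norm_ge_zero[of z] in auto)
qed

lemma stated_radius_lt:
  assumes "D \<ge> 2"
    and "norm z \<le> sqrt ((3 - sqrt 5) / (2 * (real D - 1) * exp ((sqrt 5 - 1) / 2)))"
  shows "norm z < sqrt (1 / (2 * (real D - 1)))"
proof -
  have "sqrt 5 > 2" by (rule real_less_rsqrt) simp
  moreover have "1 \<le> exp ((sqrt 5 - 1) / 2)" using \<open>sqrt 5 > 2\<close> by simp
  ultimately have "3 - sqrt 5 < exp ((sqrt 5 - 1) / 2)" by linarith
  then have "(3 - sqrt 5) / exp ((sqrt 5 - 1) / 2) < 1" by simp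
  then have "(3 - sqrt 5) / exp ((sqrt 5 - 1) / 2) / (2 * (real D - 1)) < 1 / (2 * (real D - 1))"
    using assms(1) by (intro divide_strict_right_mono) auto
  then have "(3 - sqrt 5) / (2 * (real D - 1) * exp ((sqrt 5 - 1) / 2)) < 1 / (2 * (real D - 1))"
    by (simp add: field_simps)
  then show ?thesis using assms(2) by (meson less_le_trans real_sqrt_less_iff not_le)
qed

lemma disc_le_half:
  assumes "D \<ge> 2" and "norm w < sqrt (1 / (2 * (real D - 1)))"
  shows "real (D - 1) * norm w ^ 2 \<le> 1/2"
proof -
  have "norm w ^ 2 < sqrt (1 / (2 * (real D - 1))) ^ 2"
    using assms(2) by (intro power_strict_mono) auto
  then have "norm w ^ 2 < 1 / (2 * (real D - 1))" using assms(1) by simp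
  then show ?thesis using assms(1) by (simp add: field_simps of_nat_diff)
qed

theorem mainTheorem19:
  fixes V :: "'a set" and E M :: "'a set set" and D :: nat and z :: complex
  assumes "D \<ge> 2"
    and "simple_graph V E"
    and "max_degree_eq V E D"
    and "perfect_matching V E M"
    and "norm z \<le> sqrt ((3 - sqrt 5) / (2 * (real D - 1) * exp ((sqrt 5 - 1) / 2)))"
  shows "Zpm V E M z \<noteq> 0 \<and> summable (\<lambda>n. norm (log_Zpm_coeff V E M n * z ^ n))"
proof -
  interpret matched_graph V E M D
    using assms(2-4) unfolding simple_graph_def max_degree_eq_def by unfold_locales auto
  define R where "R = sqrt (1 / (2 * (real D - 1)))"
  have z: "norm z < R" unfolding R_def by (rule stated_radius_lt[OF assms(1,5)])
  have nz: "Zpm V E M w \<noteq> 0" if "w \<in> ball 0 R" for w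
    by (intro Zpm_nonzero disc_le_half[OF assms(1)]) (use that in \<open>simp add: R_def\<close>)
  have "Zpm V E M holomorphic_on ball 0 R"
    unfolding Zpm_def by (intro holomorphic_intros)
  from summable_Taylor_Ln[OF this nz Zpm_at_0 z]
  show ?thesis using nz z unfolding log_Zpm_coeff_def by simp
qed

end
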